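(* Assume: (A1) $f(x,y)$ and each component of $g(x,y)$ are convex in $y$ for each fixed $x$, and $f,g$ are twice continuously differentiable; (A2) $Y\subseteq\mathbb{R}^m$ is a compact convex set with $\{y:\exists x\in X \text{ such that } g(x,y)\le 0\}\subseteq\mathrm{int}(Y)$; (R1) for each $x\in X$ there exists $y$ with $g(x,y)<0$. Then for every $x\in X$: the set $\arg\max_\lambda\{\psi(\lambda,x) : \lambda\ge 0\}$ is nonempty and compact, $\max_\lambda\{h(\lambda,x):\lambda\ge 0\}=\max_\lambda\{\psi(\lambda,x):\lambda\ge0\}$, and $\arg\max_\lambda\{h(\lambda,x):\lambda\ge 0\}=\arg\max_\lambda\{\psi(\lambda,x):\lambda\ge 0\}$.
   Context: Let $f:\mathbb{R}^n\times\mathbb{R}^m\to\mathbb{R}$, $g:\mathbb{R}^n\times\mathbb{R}^m\to\mathbb{R}^p$, $G:\mathbb{R}^n\to\mathbb{R}^q$; vector inequalities are componentwise. $X=\{x\in\mathbb{R}^n: G(x)\le 0\}$. For $\lambda\in\mathbb{R}^p$, the Lagrangian dual function is $\psi(\lambda,x)=\inf_{y\in\mathbb{R}^m}\{f(x,y)+\lambda^{\mathsf T}g(x,y)\}$ (possibly $-\infty$), and the constrained Lagrangian dual function is $h(\lambda,x)=\min_{y}\{f(x,y)+\lambda^{\mathsf T}g(x,y) : y\in Y\}$, with $Y$ the set from (A2). *)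

theory Defs
  imports "HOL-Analysis.Analysis"
begin

definition C2 :: "('a::euclidean_space \<Rightarrow> real) \<Rightarrow> bool" where
  "C2 F \<longleftrightarrow> (\<exists>DF :: 'a \<Rightarrow> 'a. \<exists>DDF :: 'a \<Rightarrow> ('a \<Rightarrow>\<^sub>L 'a).
      (\<forall>z. (F has_derivative (\<lambda>h. DF z \<bullet> h)) (at z)) \<and>
      (\<forall>z. (DF has_derivative blinfun_apply (DDF z)) (at z)) \<and>
      continuous_on UNIV DDF)"

definition vle :: "real^'k \<Rightarrow> real^'k \<Rightarrow> bool" where
  "vle u v \<longleftrightarrow> (\<forall>i. u $ i \<le> v $ i)"

definition vlt :: "real^'k \<Rightarrow> real^'k \<Rightarrow> bool" where
  "vlt u v \<longleftrightarrow> (\<forall>i. u $ i < v $ i)"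

text \<open>Lagrangian dual function (possibly -infinity).\<close>
definition psi ::
  "(real^'n \<Rightarrow> real^'m \<Rightarrow> real) \<Rightarrow> (real^'n \<Rightarrow> real^'m \<Rightarrow> real^'p)
     \<Rightarrow> real^'p \<Rightarrow> real^'n \<Rightarrow> ereal" where
  "psi f g l x = (INF y\<in>UNIV. ereal (f x y + l \<bullet> g x y))"

text \<open>Constrained Lagrangian dual function (minimum over Y, attained for
  compact nonempty Y and continuous integrand).\<close>
definition hdual ::
  "(real^'n \<Rightarrow> real^'m \<Rightarrow> real) \<Rightarrow> (real^'n \<Rightarrow> real^'m \<Rightarrow> real^'p) \<Rightarrow> (real^'m) set
     \<Rightarrow> real^'p \<Rightarrow> real^'n \<Rightarrow> real" where
  "hdual f g Y l x = Inf ((\<lambda>y. f x y + l \<bullet> g x y) ` Y)"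

definition argmax_on :: "('a \<Rightarrow> 'b::order) \<Rightarrow> 'a set \<Rightarrow> 'a set" where
  "argmax_on F S = {z \<in> S. \<forall>w\<in>S. F w \<le> F z}"

end

theory Submission
  imports Defs
begin

text \<open>Fix \<open>x \<in> X\<close> and consider the convex program of minimising \<open>f x\<close> subject to
  \<open>g x \<le> 0\<close>; its feasible set is compact because it lies in \<open>Y\<close>. Separating the origin
  from the convex set of attainable (constraint perturbation, excess cost) pairs gives
  Fritz John multipliers, and the Slater point forces the cost multiplier to be positive,
  so the set \<open>D\<close> of Lagrange multipliers certifying the primal value is nonempty; the Slater
  point also bounds \<open>D\<close>. Both dual functions are bounded by the primal value, attained at a
  primal solution \<open>y*\<close>, and \<open>\<psi>\<close> reaches it exactly on \<open>D\<close>. The constrained dual \<open>h\<close>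
  reaches it exactly on \<open>D\<close> as well: a Lagrangian bound valid on \<open>Y\<close> holds everywhere,
  since the convex Lagrangian attains the bound at \<open>y*\<close>, an interior point of \<open>Y\<close>, and a
  local minimum of a convex function is global.\<close>

lemma convex_on_sum_fun:
  assumes "finite I" "convex S" "\<And>i. i \<in> I \<Longrightarrow> convex_on S (h i)"
  shows "convex_on S (\<lambda>x. \<Sum>i\<in>I. h i x)"
  using assms by (induction I rule: finite_induct) (auto simp: convex_on_const)

lemma convex_on_lagrangian:
  fixes F :: "real^'m \<Rightarrow> real" and H :: "real^'m \<Rightarrow> real^'p"
  assumes "convex_on UNIV F" "\<And>i. convex_on UNIV (\<lambda>y. H y $ i)" "vle 0 l"
  shows "convex_on UNIV (\<lambda>y. F y + l \<bullet> H y)"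
proof -
  have "convex_on UNIV (\<lambda>y. \<Sum>i\<in>UNIV. l $ i * H y $ i)"
    using assms by (intro convex_on_sum_fun convex_on_cmul) (auto simp: vle_def)
  then show ?thesis
    using assms(1) by (simp add: convex_on_add inner_vec_def)
qed

lemma inner_nonneg_nonpos_le_0:
  fixes l v :: "real^'p"
  assumes "vle 0 l" "vle v 0"
  shows "l \<bullet> v \<le> 0"
  using assms unfolding inner_vec_def vle_def
  by (intro sum_nonpos) (simp add: mult_nonneg_nonpos)

lemma component_mult_le_minus_inner:
  fixes l v :: "real^'p"
  assumes "vle 0 l" "vle v 0"
  shows "l $ j * - v $ j \<le> - (l \<bullet> v)"
proof -
  have "l $ j * - v $ j \<le> (\<Sum>i\<in>UNIV. l $ i * - v $ i)"
    using assms unfolding vle_def by (intro member_le_sum) (auto intro: mult_nonneg_nonpos)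
  then show ?thesis by (simp add: inner_vec_def sum_negf)
qed

lemma nonneg_if_nonneg_along_ray:
  fixes a b :: real
  assumes "\<And>c. 0 \<le> c \<Longrightarrow> 0 \<le> a + c * b"
  shows "0 \<le> b"
proof (rule ccontr)
  assume "\<not> 0 \<le> b"
  then have "(\<bar>a\<bar> + 1) / - b * b = - (\<bar>a\<bar> + 1)" by simp
  moreover have "0 \<le> a + (\<bar>a\<bar> + 1) / - b * b"
    using \<open>\<not> 0 \<le> b\<close> by (intro assms divide_nonneg_pos) auto
  ultimately show False by linarith
qed

lemma nonneg_if_nonneg_perturbations:
  fixes a b :: real
  assumes "0 \<le> b" "\<And>e. 0 < e \<Longrightarrow> 0 \<le> a + e * b"
  shows "0 \<le> a"
proof (rule field_le_epsilon)
  fix e :: real assume "0 < e"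
  then have "0 \<le> a + e / (b + 1) * b" using assms by (intro assms(2)) simp
  moreover have "e / (b + 1) * b \<le> e"
    using \<open>0 < e\<close> \<open>0 \<le> b\<close> by (simp add: field_simps)
  ultimately show "0 \<le> a + e" by linarith
qed

lemma convex_perturbation_region:
  fixes F :: "real^'m \<Rightarrow> real" and H :: "real^'m \<Rightarrow> real^'p"
  assumes cF: "convex_on UNIV F" and cH: "\<And>i. convex_on UNIV (\<lambda>y. H y $ i)"
  shows "convex {z. \<exists>y. vle (H y) (fst z) \<and> F y < snd z}"
proof (rule convexI)
  fix z1 z2 :: "(real^'p) \<times> real" and u v :: real
  assume "z1 \<in> {z. \<exists>y. vle (H y) (fst z) \<and> F y < snd z}"
    and "z2 \<in> {z. \<exists>y. vle (H y) (fst z) \<and> F y < snd z}"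
    and u: "0 \<le> u" and v: "0 \<le> v" and uv: "u + v = 1"
  then obtain y1 y2 where y1: "vle (H y1) (fst z1)" "F y1 < snd z1"
    and y2: "vle (H y2) (fst z2)" "F y2 < snd z2" by auto
  let ?y = "u *\<^sub>R y1 + v *\<^sub>R y2"
  have "H ?y $ i \<le> fst (u *\<^sub>R z1 + v *\<^sub>R z2) $ i" for i
  proof -
    have "H ?y $ i \<le> u * H y1 $ i + v * H y2 $ i"
      using cH u v uv by (simp add: convex_on_def)
    also have "\<dots> \<le> u * fst z1 $ i + v * fst z2 $ i"
      using y1(1) y2(1) u v unfolding vle_def by (intro add_mono mult_left_mono) auto
    finally show ?thesis by simp
  qed
  moreover have "F ?y < snd (u *\<^sub>R z1 + v *\<^sub>R z2)"
  proof -
    have "F ?y \<le> u * F y1 + v * F y2"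
      using cF u v uv by (simp add: convex_on_def)
    also have "\<dots> < u * snd z1 + v * snd z2"
      using y1(2) y2(2) u v uv
      by (cases "u = 0") (auto intro!: add_less_le_mono mult_strict_left_mono mult_left_mono)
    finally show ?thesis by simp
  qed
  ultimately show "u *\<^sub>R z1 + v *\<^sub>R z2 \<in> {z. \<exists>y. vle (H y) (fst z) \<and> F y < snd z}"
    by (auto simp: vle_def)
qed

lemma fritz_john_multipliers:
  fixes F :: "real^'m \<Rightarrow> real" and H :: "real^'m \<Rightarrow> real^'p"
  assumes cF: "convex_on UNIV F" and cH: "\<And>i. convex_on UNIV (\<lambda>y. H y $ i)"
    and lower_bound: "\<And>y. vle (H y) 0 \<Longrightarrow> p \<le> F y"
  shows "\<exists>lam mu. (lam, mu) \<noteq> 0 \<and> vle 0 lam \<and> 0 \<le> mu \<and>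
           (\<forall>y. 0 \<le> lam \<bullet> H y + mu * (F y - p))"
proof -
  define S where "S = {z :: (real^'p) \<times> real. \<exists>y. vle (H y) (fst z) \<and> F y - p < snd z}"
  have "convex_on UNIV (\<lambda>y. F y - p)"
    using cF by (simp add: convex_on_diff concave_on_const)
  then have "convex S"
    unfolding S_def using cH by (rule convex_perturbation_region)
  moreover have "0 \<notin> S"
    using lower_bound by (force simp: S_def)
  ultimately obtain lam mu where nonzero: "(lam, mu) \<noteq> 0"
    and separates: "\<forall>z\<in>S. 0 \<le> (lam, mu) \<bullet> z"
    using separating_hyperplane_set_0 by (metis prod.collapse)
  have key: "0 \<le> lam \<bullet> u + mu * t" if "vle (H y) u" "F y - p < t" for y u t
    using separates that by (force simp: S_def)
  have H_refl: "vle (H 0) (H 0)" by (simp add: vle_def)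
  have "0 \<le> mu"
  proof (rule nonneg_if_nonneg_along_ray)
    fix c :: real assume "0 \<le> c"
    then show "0 \<le> (lam \<bullet> H 0 + mu * (F 0 - p + 1)) + c * mu"
      using key[OF H_refl, of "F 0 - p + 1 + c"] by (simp add: algebra_simps)
  qed
  moreover have "vle 0 lam"
    unfolding vle_def
  proof
    fix i
    show "0 $ i \<le> lam $ i"
    proof (simp, rule nonneg_if_nonneg_along_ray)
      fix c :: real assume "0 \<le> c"
      then have "vle (H 0) (H 0 + c *\<^sub>R axis i 1)"
        by (auto simp: vle_def axis_def)
      then have "0 \<le> lam \<bullet> (H 0 + c *\<^sub>R axis i 1) + mu * (F 0 - p + 1)"
        by (rule key) simp
      then show "0 \<le> (lam \<bullet> H 0 + mu * (F 0 - p + 1)) + c * lam $ i"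
        by (simp add: inner_add_right inner_axis algebra_simps)
    qed
  qed
  moreover have "0 \<le> lam \<bullet> H y + mu * (F y - p)" for y
    using \<open>0 \<le> mu\<close>
  proof (rule nonneg_if_nonneg_perturbations)
    fix e :: real assume "0 < e"
    then show "0 \<le> lam \<bullet> H y + mu * (F y - p) + e * mu"
      using key[of y "H y" "F y - p + e"] by (simp add: vle_def algebra_simps)
  qed
  ultimately show ?thesis using nonzero by blast
qed

lemma slater_lagrange_multiplier:
  fixes F :: "real^'m \<Rightarrow> real" and H :: "real^'m \<Rightarrow> real^'p"
  assumes cF: "convex_on UNIV F" and cH: "\<And>i. convex_on UNIV (\<lambda>y. H y $ i)"
    and slater: "vlt (H y0) 0" and lower_bound: "\<And>y. vle (H y) 0 \<Longrightarrow> p \<le> F y"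
  shows "\<exists>l. vle 0 l \<and> (\<forall>y. p \<le> F y + l \<bullet> H y)"
proof -
  obtain lam mu where nonzero: "(lam, mu) \<noteq> 0" and lam: "vle 0 lam" and "0 \<le> mu"
    and multipliers: "\<And>y. 0 \<le> lam \<bullet> H y + mu * (F y - p)"
    using fritz_john_multipliers[OF cF cH lower_bound] by blast
  have "mu \<noteq> 0"
  proof
    assume "mu = 0"
    then obtain j where "lam $ j \<noteq> 0"
      using nonzero by (metis vec_eq_iff zero_index zero_prod_def)
    then have "0 < lam $ j" using lam by (simp add: vle_def order_less_le)
    then have "0 < lam $ j * - H y0 $ j"
      using slater by (simp add: vlt_def mult_pos_neg)
    also have "\<dots> \<le> - (lam \<bullet> H y0)"
      using lam slater by (intro component_mult_le_minus_inner) (auto simp: vle_def vlt_def less_imp_le)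
    finally show False
      using multipliers[of y0] \<open>mu = 0\<close> by simp
  qed
  then have "0 < mu" using \<open>0 \<le> mu\<close> by simp
  have "p \<le> F y + (1 / mu) *\<^sub>R lam \<bullet> H y" for y
    using multipliers[of y] \<open>0 < mu\<close> by (simp add: field_simps)
  moreover have "vle 0 ((1 / mu) *\<^sub>R lam)"
    using lam \<open>0 < mu\<close> by (simp add: vle_def)
  ultimately show ?thesis by blast
qed

lemma convex_lower_bound_from_interior:
  fixes \<phi> :: "'a::real_normed_vector \<Rightarrow> real"
  assumes "convex_on UNIV \<phi>" and "z \<in> interior Y" and "\<phi> z \<le> c" and "\<forall>y\<in>Y. c \<le> \<phi> y"
  shows "c \<le> \<phi> y"
proof -
  obtain e where "0 < e" "ball z e \<subseteq> Y"
    using \<open>z \<in> interior Y\<close> mem_interior by blast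
  then have "\<forall>y\<in>ball z e. \<phi> z \<le> \<phi> y"
    using assms(3,4) by force
  then have "\<phi> z \<le> \<phi> y"
    using convex_local_global_minimum[OF \<open>0 < e\<close> assms(1)] by blast
  moreover have "c \<le> \<phi> z"
    using assms(2,4) interior_subset by blast
  ultimately show ?thesis by linarith
qed

lemma argmax_on_eq_attaining_set:
  fixes \<Phi> :: "'a \<Rightarrow> 'b::order"
  assumes bound: "\<And>l. l \<in> L \<Longrightarrow> \<Phi> l \<le> v"
    and attains: "\<And>l. l \<in> L \<Longrightarrow> v \<le> \<Phi> l \<longleftrightarrow> l \<in> D"
    and "D \<subseteq> L" and "D \<noteq> {}"
  shows "argmax_on \<Phi> L = D"
proof -
  obtain l0 where "l0 \<in> D" using \<open>D \<noteq> {}\<close> by blast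
  then have "\<Phi> l0 = v" using bound attains \<open>D \<subseteq> L\<close> by (blast intro: antisym)
  then show ?thesis
    using bound attains \<open>D \<subseteq> L\<close> \<open>l0 \<in> D\<close> unfolding argmax_on_def by (blast intro: order_trans)
qed

lemma SUP_eq_attained_bound:
  fixes \<Phi> :: "'a \<Rightarrow> 'b::complete_lattice"
  assumes "\<And>l. l \<in> L \<Longrightarrow> \<Phi> l \<le> v" and "l0 \<in> L" and "v \<le> \<Phi> l0"
  shows "(SUP l\<in>L. \<Phi> l) = v"
  using assms by (intro SUP_eqI) (auto intro: order_trans)

locale convex_program =
  fixes F :: "real^'m \<Rightarrow> real" and H :: "real^'m \<Rightarrow> real^'p"
  assumes continuous_F: "continuous_on UNIV F"
    and continuous_H: "continuous_on UNIV H"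
    and convex_F: "convex_on UNIV F"
    and convex_H: "\<And>i. convex_on UNIV (\<lambda>y. H y $ i)"
    and compact_feasible: "compact {y. vle (H y) 0}"
    and slater: "\<exists>y0. vlt (H y0) 0"
begin

definition primal_value :: real where
  "primal_value = Inf (F ` {y. vle (H y) 0})"

definition dual_optimal :: "(real^'p) set" where
  "dual_optimal = {l. vle 0 l \<and> (\<forall>y. primal_value \<le> F y + l \<bullet> H y)}"

lemma primal_value_le: "vle (H y) 0 \<Longrightarrow> primal_value \<le> F y"
  unfolding primal_value_def
  by (intro cInf_lower imageI bounded_imp_bdd_below compact_imp_bounded
      compact_continuous_image compact_feasible continuous_on_subset[OF continuous_F]) auto

lemma primal_value_attained:
  obtains ys where "vle (H ys) 0" and "F ys = primal_value"
proof -
  obtain y0 where "vlt (H y0) 0" using slater by blast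
  then have "{y. vle (H y) 0} \<noteq> {}" by (auto simp: vle_def vlt_def intro: less_imp_le)
  then obtain ys where feasible: "vle (H ys) 0" and minimal: "\<And>y. vle (H y) 0 \<Longrightarrow> F ys \<le> F y"
    using continuous_attains_inf[OF compact_feasible _ continuous_on_subset[OF continuous_F]]
    by blast
  have "primal_value \<le> F ys" using feasible by (rule primal_value_le)
  moreover have "F ys \<le> primal_value"
    unfolding primal_value_def using feasible minimal by (intro cInf_greatest) auto
  ultimately show thesis using that feasible by simp
qed

lemma dual_optimal_nonempty: "dual_optimal \<noteq> {}"
  using slater slater_lagrange_multiplier[OF convex_F convex_H _ primal_value_le]
  unfolding dual_optimal_def by blast

lemma compact_dual_optimal: "compact dual_optimal"
proof -
  obtain y0 where slater_point: "vlt (H y0) 0" using slater by blast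
  define B where "B = F y0 - primal_value"
  have component_bound: "l $ j \<le> B / - H y0 $ j" if "l \<in> dual_optimal" for l j
  proof -
    have "l $ j * - H y0 $ j \<le> - (l \<bullet> H y0)"
      using that slater_point
      by (intro component_mult_le_minus_inner) (auto simp: dual_optimal_def vle_def vlt_def less_imp_le)
    also have "\<dots> \<le> B"
      using that unfolding dual_optimal_def B_def by (smt (verit) mem_Collect_eq)
    finally have "l $ j * - H y0 $ j \<le> B" .
    moreover have "0 < - H y0 $ j" using slater_point by (simp add: vlt_def)
    ultimately show ?thesis by (subst pos_le_divide_eq)
  qed
  have "norm l \<le> (\<Sum>j\<in>UNIV. B / - H y0 $ j)" if "l \<in> dual_optimal" for l
  proof -
    have "norm l \<le> (\<Sum>j\<in>UNIV. \<bar>l $ j\<bar>)" by (rule norm_le_l1_cart)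
    also have "\<dots> \<le> (\<Sum>j\<in>UNIV. B / - H y0 $ j)"
      using that component_bound by (intro sum_mono) (simp add: dual_optimal_def vle_def)
    finally show ?thesis .
  qed
  then have "bounded dual_optimal" unfolding bounded_iff by blast
  moreover have "closed dual_optimal"
    unfolding dual_optimal_def vle_def
    by (intro closed_Collect_conj closed_Collect_all closed_Collect_le continuous_intros)
  ultimately show ?thesis by (simp add: compact_eq_bounded_closed)
qed

definition dual_function :: "real^'p \<Rightarrow> ereal" where
  "dual_function l = (INF y. ereal (F y + l \<bullet> H y))"

lemma dual_function_le_primal_value:
  assumes "vle 0 l" shows "dual_function l \<le> ereal primal_value"
proof -
  obtain ys where "vle (H ys) 0" and "F ys = primal_value" by (rule primal_value_attained)
  then show ?thesis
    unfolding dual_function_def using assms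
    by (intro INF_lower2[of ys]) (auto dest: inner_nonneg_nonpos_le_0)
qed

lemma primal_value_le_dual_function_iff:
  assumes "vle 0 l" shows "ereal primal_value \<le> dual_function l \<longleftrightarrow> l \<in> dual_optimal"
  using assms by (simp add: dual_function_def dual_optimal_def le_INF_iff)

lemma argmax_dual_function: "argmax_on dual_function {l. vle 0 l} = dual_optimal"
  using dual_function_le_primal_value primal_value_le_dual_function_iff dual_optimal_nonempty
  by (intro argmax_on_eq_attaining_set) (auto simp: dual_optimal_def)

lemma SUP_dual_function: "(SUP l\<in>{l. vle 0 l}. dual_function l) = ereal primal_value"
proof -
  obtain l0 where "l0 \<in> dual_optimal" using dual_optimal_nonempty by blast
  then show ?thesis
    using dual_function_le_primal_value primal_value_le_dual_function_iff
    by (intro SUP_eq_attained_bound[of _ _ _ l0]) (auto simp: dual_optimal_def)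
qed

end

locale convex_program_on = convex_program F H
  for F :: "real^'m \<Rightarrow> real" and H :: "real^'m \<Rightarrow> real^'p" +
  fixes Y :: "(real^'m) set"
  assumes compact_Y: "compact Y"
    and feasible_in_interior: "{y. vle (H y) 0} \<subseteq> interior Y"
begin

definition constrained_dual_function :: "real^'p \<Rightarrow> real" where
  "constrained_dual_function l = Inf ((\<lambda>y. F y + l \<bullet> H y) ` Y)"

lemma bdd_below_lagrangian_on_Y: "bdd_below ((\<lambda>y. F y + l \<bullet> H y) ` Y)"
  by (intro bounded_imp_bdd_below compact_imp_bounded compact_continuous_image compact_Y
      continuous_intros continuous_on_subset[OF continuous_F] continuous_on_subset[OF continuous_H])
    auto

lemma constrained_dual_function_le_primal_value:
  assumes "vle 0 l" shows "constrained_dual_function l \<le> primal_value"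
proof -
  obtain ys where "vle (H ys) 0" and "F ys = primal_value" by (rule primal_value_attained)
  moreover have "ys \<in> Y" using \<open>vle (H ys) 0\<close> feasible_in_interior interior_subset by blast
  ultimately show ?thesis
    unfolding constrained_dual_function_def using assms
    by (intro cInf_lower2[OF _ _ bdd_below_lagrangian_on_Y]) (auto dest: inner_nonneg_nonpos_le_0)
qed

lemma primal_value_le_constrained_dual_function_iff:
  assumes "vle 0 l"
  shows "primal_value \<le> constrained_dual_function l \<longleftrightarrow> l \<in> dual_optimal"
proof -
  have "Y \<noteq> {}" using slater feasible_in_interior interior_subset
    by (fastforce simp: vle_def vlt_def intro: less_imp_le)
  then have "primal_value \<le> constrained_dual_function l \<longleftrightarrow>
      (\<forall>y\<in>Y. primal_value \<le> F y + l \<bullet> H y)"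
    unfolding constrained_dual_function_def by (simp add: le_cInf_iff bdd_below_lagrangian_on_Y)
  also have "\<dots> \<longleftrightarrow> (\<forall>y. primal_value \<le> F y + l \<bullet> H y)"
  proof safe
    fix y assume bound_on_Y: "\<forall>y\<in>Y. primal_value \<le> F y + l \<bullet> H y"
    obtain ys where "vle (H ys) 0" and "F ys = primal_value" by (rule primal_value_attained)
    then show "primal_value \<le> F y + l \<bullet> H y"
      using assms feasible_in_interior bound_on_Y inner_nonneg_nonpos_le_0[of l "H ys"]
      by (intro convex_lower_bound_from_interior[OF convex_on_lagrangian[OF convex_F convex_H]])
        auto
  qed simp
  finally show ?thesis using assms by (simp add: dual_optimal_def)
qed

lemma argmax_constrained_dual_function:
  "argmax_on constrained_dual_function {l. vle 0 l} = dual_optimal"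
  using constrained_dual_function_le_primal_value primal_value_le_constrained_dual_function_iff
    dual_optimal_nonempty
  by (intro argmax_on_eq_attaining_set) (auto simp: dual_optimal_def)

lemma SUP_constrained_dual_function:
  "(SUP l\<in>{l. vle 0 l}. ereal (constrained_dual_function l)) = ereal primal_value"
proof -
  obtain l0 where "l0 \<in> dual_optimal" using dual_optimal_nonempty by blast
  then show ?thesis
    using constrained_dual_function_le_primal_value primal_value_le_constrained_dual_function_iff
    by (intro SUP_eq_attained_bound[of _ _ _ l0]) (auto simp: dual_optimal_def)
qed

end

lemma C2_imp_continuous: "C2 F \<Longrightarrow> continuous_on UNIV F"
  unfolding C2_def by (metis continuous_at_imp_continuous_on has_derivative_continuous)

lemma continuous_on_slice:
  assumes "continuous_on UNIV \<Phi>"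
  shows "continuous_on UNIV (\<lambda>y. \<Phi> (x, y))"
  by (rule continuous_on_compose2[OF assms]) (auto intro: continuous_intros)

theorem theorem1:
  fixes f :: "real^'n \<Rightarrow> real^'m \<Rightarrow> real"
    and g :: "real^'n \<Rightarrow> real^'m \<Rightarrow> real^'p"
    and G :: "real^'n \<Rightarrow> real^'q"
    and X :: "(real^'n) set" and Y :: "(real^'m) set"
  assumes X_def: "X = {x. vle (G x) 0}"
    and A1_convf: "\<And>x. convex_on UNIV (\<lambda>y. f x y)"
    and A1_convg: "\<And>x i. convex_on UNIV (\<lambda>y. g x y $ i)"
    and A1_C2f: "C2 (\<lambda>z::(real^'n) \<times> (real^'m). f (fst z) (snd z))"
    and A1_C2g: "\<And>i. C2 (\<lambda>z::(real^'n) \<times> (real^'m). g (fst z) (snd z) $ i)"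
    and A2_compact: "compact Y" and A2_convex: "convex Y"
    and A2_int: "{y. \<exists>x\<in>X. vle (g x y) 0} \<subseteq> interior Y"
    and R1: "\<And>x. x \<in> X \<Longrightarrow> \<exists>y. vlt (g x y) 0"
  shows "\<forall>x\<in>X.
     (let L = {l::real^'p. vle 0 l} in
        argmax_on (\<lambda>l. psi f g l x) L \<noteq> {} \<and>
        compact (argmax_on (\<lambda>l. psi f g l x) L) \<and>
        (SUP l\<in>L. ereal (hdual f g Y l x)) = (SUP l\<in>L. psi f g l x) \<and>
        argmax_on (\<lambda>l. hdual f g Y l x) L = argmax_on (\<lambda>l. psi f g l x) L)"
proof
  \<comment> \<open>Neither the convexity of \<open>Y\<close> nor the description of \<open>X\<close> is needed.\<close>
  fix x assume "x \<in> X"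
  have continuous_g: "continuous_on UNIV (\<lambda>y. g x y $ i)" for i
    using continuous_on_slice[OF C2_imp_continuous[OF A1_C2g]] by simp
  have feasible_in_interior: "{y. vle (g x y) 0} \<subseteq> interior Y"
    using A2_int \<open>x \<in> X\<close> by blast
  have "closed {y. vle (g x y) 0}"
    unfolding vle_def by (intro closed_Collect_all closed_Collect_le continuous_g continuous_intros)
  then have "compact {y. vle (g x y) 0}"
    using feasible_in_interior interior_subset A2_compact
    by (metis compact_Int_closed inf.absorb_iff2 order_trans)
  then interpret convex_program_on "f x" "g x" Y
    using continuous_on_slice[OF C2_imp_continuous[OF A1_C2f]] continuous_g A1_convf A1_convg
      R1[OF \<open>x \<in> X\<close>] A2_compact feasible_in_interior
    by unfold_locales (auto intro: continuous_on_vec_lambda[of _ "\<lambda>i y. g x y $ i", simplified])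
  have "psi f g l x = dual_function l" for l
    by (simp add: psi_def dual_function_def)
  moreover have "hdual f g Y l x = constrained_dual_function l" for l
    by (simp add: hdual_def constrained_dual_function_def)
  ultimately show "let L = {l::real^'p. vle 0 l} in
        argmax_on (\<lambda>l. psi f g l x) L \<noteq> {} \<and>
        compact (argmax_on (\<lambda>l. psi f g l x) L) \<and>
        (SUP l\<in>L. ereal (hdual f g Y l x)) = (SUP l\<in>L. psi f g l x) \<and>
        argmax_on (\<lambda>l. hdual f g Y l x) L = argmax_on (\<lambda>l. psi f g l x) L"
    using argmax_dual_function argmax_constrained_dual_function dual_optimal_nonempty
      compact_dual_optimal SUP_dual_function SUP_constrained_dual_function
    by simp
qed

end
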